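(* Let $X,Y\in\mathbf{R}$ with $Y\ge1$, and let $f\colon(X,X+Y]\to\mathbf{R}$ be a real function with continuous derivatives up to order $2$ such that $0<\lambda\le f''(x)\le\Lambda$ for $X<x\le X+Y$. Then \[ \Bigl|\frac{1}{Y}\sum_{X<n\le X+Y}e(f(n))\Bigr|\le A\Bigl\{\Bigl(\frac{\Lambda^2}{\lambda}\Bigr)^{1/2}+2(\lambda Y^2)^{-1/2}\Bigr\}, \] where $A=\frac{2}{\sqrt\pi}\bigl(1+\sqrt{1+3\pi/8}\bigr)=2.79368\ldots$.
   Context: $e(x)=e^{2\pi i x}$; the sum runs over integers $n$. *)

theory Defs
  imports "HOL-Analysis.Analysis"
begin

definition e :: "real \<Rightarrow> complex" where
  "e x = exp (2 * pi * \<i> * complex_of_real x)"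

end

theory Submission
  imports Defs
begin

(* Write the sum as the sum of e (phi j) for j < M, where phi j = f (floor X + 1 + j) and M <= Y + 1.
   By the mean value theorem the second differences of phi lie in [lam, Lam], so the first
   differences phi (j + 1) - phi j increase in steps between lam and Lam.  Group the indices by the
   integer k = floor (phi (j + 1) - phi j + d).  In each group at most 2 d / lam + 1 indices have
   their difference within d of k; on the remaining ones the difference stays in [k + d, k + 1 - d]
   and increases, so the Kusmin-Landau inequality (summation by parts against
   1 / (e t - 1) = - (1 + i cot (pi t)) / 2) bounds their sum by cot (pi d / 2) <= 2 / (pi d).
   There are at most Lam Y + 2 groups, and d = sqrt (lam / pi) yields the bound
   2.79 (Lam Y + 2) / sqrt lam, which implies the claim because the constant A exceeds 2.79. *)

lemma e_cis: "e x = cis (2 * pi * x)"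
  unfolding e_def cis_conv_exp by (simp add: mult_ac)

lemma norm_e [simp]: "norm (e x) = 1"
  by (simp add: e_cis)

lemma e_add: "e (x + y) = e x * e y"
  unfolding e_def by (simp add: distrib_left distrib_right exp_add)

lemma e_of_int [simp]: "e (of_int k) = 1"
proof -
  have "complex_of_real (of_int k) \<in> \<int>"
    by (metis Ints_of_int of_real_of_int_eq)
  then show ?thesis
    by (simp add: e_cis cis_multiple_2pi)
qed

lemma e_minus_one_eq: "e t - 1 = 2 * sin (pi * t) * Complex (- sin (pi * t)) (cos (pi * t))"
proof -
  have "sin (2 * pi * t) = 2 * sin (pi * t) * cos (pi * t)"
    using sin_double[of "pi * t"] by (simp add: mult_ac)
  moreover have "cos (2 * pi * t) - 1 = - 2 * sin (pi * t) * sin (pi * t)"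
    using cos_double_sin[of "pi * t"] by (simp add: mult_ac power2_eq_square)
  ultimately show ?thesis
    by (simp add: e_cis cis.code complex_eq_iff)
qed

lemma norm_e_minus_one: "norm (e t - 1) = 2 * \<bar>sin (pi * t)\<bar>"
  by (simp add: e_minus_one_eq norm_mult complex_norm)

lemma inverse_e_minus_one:
  assumes "sin (pi * t) \<noteq> 0"
  shows "inverse (e t - 1) = Complex (- 1/2) (- cot (pi * t) / 2)"
proof (rule inverse_unique)
  show "(e t - 1) * Complex (- 1/2) (- cot (pi * t) / 2) = 1"
    using assms sin_cos_squared_add3[of "pi * t"]
    by (simp add: e_minus_one_eq cot_def complex_eq_iff field_simps)
qed

lemma cot_pi_minus: "cot (pi - x) = - cot (x :: real)"
  by (simp add: cot_def sin_diff cos_diff)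

lemma cot_antimono:
  fixes x y :: real
  assumes "0 < x" "x \<le> y" "y < pi"
  shows "cot y \<le> cot x"
proof -
  have "sin x > 0" "sin y > 0"
    using assms by (auto intro: sin_gt_zero)
  moreover have "sin (y - x) \<ge> 0"
    using assms by (intro sin_ge_zero) auto
  ultimately show ?thesis
    by (simp add: cot_def sin_diff divide_simps mult_ac)
qed

lemma abs_cot_pi_le:
  fixes d t :: real
  assumes "0 < d" "d \<le> t" "t \<le> 1 - d"
  shows "\<bar>cot (pi * t)\<bar> \<le> cot (pi * d)"
proof -
  have "pi * d \<le> pi * t" "pi * t \<le> pi * (1 - d)"
    using assms by simp_all
  then show ?thesis
    using cot_antimono[of "pi * d" "pi * t"] cot_antimono[of "pi * t" "pi - pi * d"] cot_pi_minus[of "pi * d"] assms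
    by (auto simp: right_diff_distrib)
qed

lemma sin_pi_le:
  fixes d t :: real
  assumes "0 \<le> d" "d \<le> t" "t \<le> 1 - d"
  shows "sin (pi * d) \<le> sin (pi * t)"
proof -
  have "0 \<le> pi * d" "pi * d \<le> pi * t" "pi * d \<le> pi * (1 - t)"
    using assms by simp_all
  moreover have "pi * t \<le> pi / 2 \<or> pi * (1 - t) \<le> pi / 2"
    by (cases "t \<le> 1/2") simp_all
  ultimately show ?thesis
    using sin_monotone_2pi_le[of "pi * d" "pi * t"] sin_monotone_2pi_le[of "pi * d" "pi * (1 - t)"]
    by (auto simp: right_diff_distrib)
qed

lemma inverse_sin_plus_cot:
  fixes x :: real
  assumes "0 < x" "x < pi"
  shows "1 / sin x + cot x = cot (x / 2)"
proof -
  obtain y where x: "x = 2 * y" and "sin y > 0" "cos y > 0"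
    using assms by (intro that[of "x / 2"]) (auto intro: sin_gt_zero cos_gt_zero)
  then show ?thesis
    unfolding x cot_def sin_double cos_double_cos
    by (simp add: field_simps power2_eq_square)
qed

lemma cot_le_inverse:
  fixes x :: real
  assumes "0 < x" "x < pi / 2"
  shows "cot x \<le> 1 / x"
proof -
  have "(\<lambda>t. sin t - t * cos t) 0 \<le> (\<lambda>t. sin t - t * cos t) x"
  proof (rule DERIV_nonneg_imp_increasing_open[of 0 x])
    fix t assume "0 < t" "t < x"
    then show "\<exists>y. ((\<lambda>t. sin t - t * cos t) has_real_derivative y) (at t) \<and> 0 \<le> y"
      using assms by (intro exI conjI derivative_eq_intros refl)
        (auto intro!: mult_nonneg_nonneg sin_ge_zero)
  qed (use assms in \<open>auto intro!: continuous_intros\<close>)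
  moreover have "sin x > 0"
    using assms by (intro sin_gt_zero) auto
  ultimately show ?thesis
    using assms by (simp add: cot_def divide_simps mult_ac)
qed

lemma norm_inverse_e_minus_one_le:
  fixes d t :: real
  assumes "0 < d" "d \<le> t" "t \<le> 1 - d"
  shows "norm (inverse (e t - 1)) \<le> 1 / (2 * sin (pi * d))"
proof -
  have "0 < sin (pi * d)"
    using assms by (intro sin_gt_zero) auto
  moreover have "sin (pi * d) \<le> sin (pi * t)"
    using assms by (intro sin_pi_le) auto
  ultimately have "1 / (2 * sin (pi * t)) \<le> 1 / (2 * sin (pi * d))"
    by (intro divide_left_mono mult_left_mono mult_pos_pos) auto
  moreover have "norm (inverse (e t - 1)) = inverse (2 * \<bar>sin (pi * t)\<bar>)"
    by (simp add: norm_inverse norm_e_minus_one)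
  ultimately show ?thesis
    using \<open>0 < sin (pi * d)\<close> \<open>sin (pi * d) \<le> sin (pi * t)\<close> by (simp add: inverse_eq_divide)
qed

lemma norm_diff_inverse_e_minus_one:
  fixes s t :: real
  assumes "0 < s" "s \<le> t" "t < 1"
  shows "norm (inverse (e s - 1) - inverse (e t - 1)) = (cot (pi * s) - cot (pi * t)) / 2"
proof -
  have "0 < sin (pi * s)" "0 < sin (pi * t)"
    using assms by (intro sin_gt_zero; simp)+
  then have "inverse (e s - 1) - inverse (e t - 1) = Complex 0 ((cot (pi * t) - cot (pi * s)) / 2)"
    by (simp add: inverse_e_minus_one complex_eq_iff)
  moreover have "cot (pi * t) \<le> cot (pi * s)"
    using assms by (intro cot_antimono) auto
  ultimately show ?thesis
    by (simp add: complex_norm)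
qed

definition fwd_diff :: "(nat \<Rightarrow> 'a::ab_group_add) \<Rightarrow> nat \<Rightarrow> 'a" where
  "fwd_diff \<phi> j = \<phi> (Suc j) - \<phi> j"

lemma fwd_diff_fwd_diff: "fwd_diff (fwd_diff \<phi>) j = \<phi> (Suc (Suc j)) - 2 * \<phi> (Suc j) + \<phi> j"
  for \<phi> :: "nat \<Rightarrow> 'a::ring_1"
  by (simp add: fwd_diff_def algebra_simps mult_2)

lemma norm_sum_le_summation_by_parts:
  fixes E c :: "nat \<Rightarrow> 'a::real_normed_div_algebra"
  assumes E: "\<And>j. j \<le> n \<Longrightarrow> E j = c j * (E (Suc j) - E j)"
    and norm_E: "\<And>j. j \<le> Suc n \<Longrightarrow> norm (E j) \<le> 1"
  shows "norm (\<Sum>j\<le>n. E j) \<le> norm (c 0) + norm (c n) + (\<Sum>j<n. norm (c j - c (Suc j)))"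
proof -
  have partial: "norm ((\<Sum>j\<le>m. E j) - c m * E (Suc m)) \<le> norm (c 0) + (\<Sum>j<m. norm (c j - c (Suc j)))"
    if "m \<le> n" for m
    using that
  proof (induction m)
    case 0
    have "E 0 - c 0 * E 1 = - (c 0 * E 0)"
      using E[of 0] by (simp add: algebra_simps)
    then show ?case
      using norm_E[of 0] by (simp add: norm_mult mult_left_le)
  next
    case (Suc m)
    have "(\<Sum>j\<le>Suc m. E j) - c (Suc m) * E (Suc (Suc m))
        = ((\<Sum>j\<le>m. E j) - c m * E (Suc m)) + (c m - c (Suc m)) * E (Suc m)"
      using E[of "Suc m"] Suc.prems by (simp add: algebra_simps)
    also have "norm \<dots> \<le> norm ((\<Sum>j\<le>m. E j) - c m * E (Suc m)) + norm (c m - c (Suc m))"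
      using norm_E[of "Suc m"] Suc.prems
      by (intro norm_triangle_le add_left_mono) (simp add: norm_mult mult_left_le)
    finally show ?case
      using Suc by simp
  qed
  have "(\<Sum>j\<le>n. E j) = ((\<Sum>j\<le>n. E j) - c n * E (Suc n)) + c n * E (Suc n)"
    by simp
  also have "norm \<dots> \<le> norm ((\<Sum>j\<le>n. E j) - c n * E (Suc n)) + norm (c n)"
    using norm_E[of "Suc n"] by (intro norm_triangle_le add_left_mono) (simp add: norm_mult mult_left_le)
  finally show ?thesis
    using partial[of n] by simp
qed

lemma kusmin_landau:
  fixes \<phi> :: "nat \<Rightarrow> real" and k :: int and d :: real
  assumes d: "0 < d" "d \<le> 1/2"
    and range: "\<And>j. j \<le> n \<Longrightarrow> k + d \<le> fwd_diff \<phi> j \<and> fwd_diff \<phi> j \<le> k + 1 - d"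
    and mono: "\<And>j. j < n \<Longrightarrow> fwd_diff \<phi> j \<le> fwd_diff \<phi> (Suc j)"
  shows "norm (\<Sum>j\<le>n. e (\<phi> j)) \<le> cot (pi * d / 2)"
proof -
  define \<theta> where "\<theta> j = fwd_diff \<phi> j - k" for j
  define c where "c j = inverse (e (\<theta> j) - 1)" for j
  have \<theta>: "d \<le> \<theta> j \<and> \<theta> j \<le> 1 - d" if "j \<le> n" for j
    using range[OF that] by (simp add: \<theta>_def)
  have "e (\<phi> j) = c j * (e (\<phi> (Suc j)) - e (\<phi> j))" if "j \<le> n" for j
  proof -
    have "0 < sin (pi * \<theta> j)"
      using \<theta>[OF that] d by (intro sin_gt_zero) auto
    then have "e (\<theta> j) \<noteq> 1"
      using norm_e_minus_one[of "\<theta> j"] by auto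
    moreover have "\<phi> (Suc j) = \<phi> j + \<theta> j + of_int k"
      by (simp add: \<theta>_def fwd_diff_def)
    then have "e (\<phi> (Suc j)) - e (\<phi> j) = e (\<phi> j) * (e (\<theta> j) - 1)"
      by (simp add: e_add algebra_simps)
    ultimately show ?thesis
      by (simp add: c_def)
  qed
  then have "norm (\<Sum>j\<le>n. e (\<phi> j)) \<le> norm (c 0) + norm (c n) + (\<Sum>j<n. norm (c j - c (Suc j)))"
    by (intro norm_sum_le_summation_by_parts) auto
  also have "(\<Sum>j<n. norm (c j - c (Suc j))) = (\<Sum>j<n. cot (pi * \<theta> j) - cot (pi * \<theta> (Suc j))) / 2"
  proof -
    have diff: "norm (c j - c (Suc j)) = (cot (pi * \<theta> j) - cot (pi * \<theta> (Suc j))) / 2" if "j < n" for j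
      unfolding c_def using \<theta>[of j] \<theta>[of "Suc j"] mono[OF that] that d
      by (intro norm_diff_inverse_e_minus_one) (auto simp: \<theta>_def)
    show ?thesis
      unfolding sum_divide_distrib by (intro sum.cong) (simp_all add: diff)
  qed
  also have "(\<Sum>j<n. cot (pi * \<theta> j) - cot (pi * \<theta> (Suc j))) = cot (pi * \<theta> 0) - cot (pi * \<theta> n)"
    by (rule sum_lessThan_telescope')
  also have "(cot (pi * \<theta> 0) - cot (pi * \<theta> n)) / 2 \<le> cot (pi * d)"
    using abs_cot_pi_le[of d "\<theta> 0"] abs_cot_pi_le[of d "\<theta> n"] \<theta>[of 0] \<theta>[of n] d
    by (simp add: abs_le_iff)
  finally have "norm (\<Sum>j\<le>n. e (\<phi> j)) \<le> 1 / sin (pi * d) + cot (pi * d)"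
    using norm_inverse_e_minus_one_le[of d "\<theta> 0"] norm_inverse_e_minus_one_le[of d "\<theta> n"] \<theta>[of 0] \<theta>[of n] d
    by (simp add: c_def)
  also have "\<dots> = cot (pi * d / 2)"
    using d by (intro inverse_sin_plus_cot) auto
  finally show ?thesis .
qed

lemma fwd_diff_bounds_imp_increment_bounds:
  fixes g :: "nat \<Rightarrow> real"
  assumes bounds: "\<And>j. j < L \<Longrightarrow> lo \<le> fwd_diff g j \<and> fwd_diff g j \<le> hi"
    and "i \<le> j" "j \<le> L"
  shows "lo * (real j - real i) \<le> g j - g i \<and> g j - g i \<le> hi * (real j - real i)"
  using assms(2,3)
proof (induction j rule: dec_induct)
  case (step m)
  then show ?case
    using bounds[of m] by (simp add: fwd_diff_def algebra_simps)
qed simp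

lemma card_le_of_increments:
  fixes g :: "nat \<Rightarrow> real"
  assumes "0 < lam" "0 \<le> w"
    and incr: "\<And>i j. i \<le> j \<Longrightarrow> j \<le> L \<Longrightarrow> lam * (real j - real i) \<le> g j - g i"
  shows "card {j. j \<le> L \<and> a \<le> g j \<and> g j < a + w} \<le> w / lam + 1"
    (is "real (card ?S) \<le> _")
proof (cases "?S = {}")
  case True
  show ?thesis
    unfolding True using assms by simp
next
  case False
  have "finite ?S"
    by simp
  have min: "Min ?S \<in> ?S" and max: "Max ?S \<in> ?S"
    using \<open>finite ?S\<close> False by (rule Min_in, rule Max_in)
  have sub: "?S \<subseteq> {Min ?S..Max ?S}"
    using Min_le[OF \<open>finite ?S\<close>] Max_ge[OF \<open>finite ?S\<close>] by auto
  have "Min ?S \<le> Max ?S"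
    using sub min by auto
  have "card ?S \<le> card {Min ?S..Max ?S}"
    using sub by (intro card_mono) auto
  then have "real (card ?S) \<le> real (Max ?S) - real (Min ?S) + 1"
    using \<open>Min ?S \<le> Max ?S\<close> by (simp add: of_nat_diff)
  have "lam * (real (Max ?S) - real (Min ?S)) \<le> g (Max ?S) - g (Min ?S)"
    using incr \<open>Min ?S \<le> Max ?S\<close> max by blast
  moreover have "g (Max ?S) - g (Min ?S) < w"
    using min max by simp
  ultimately have "(real (Max ?S) - real (Min ?S)) * lam < w"
    by (simp add: mult.commute)
  then have "real (Max ?S) - real (Min ?S) < w / lam"
    using \<open>0 < lam\<close> by (simp add: pos_less_divide_eq)
  then show ?thesis
    using \<open>real (card ?S) \<le> real (Max ?S) - real (Min ?S) + 1\<close> by linarith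
qed

lemma finite_convex_nat_set_eq_atLeastAtMost:
  fixes S :: "nat set"
  assumes "finite S" "S \<noteq> {}"
    and convex: "\<And>i j m. i \<in> S \<Longrightarrow> j \<in> S \<Longrightarrow> i \<le> m \<Longrightarrow> m \<le> j \<Longrightarrow> m \<in> S"
  shows "S = {Min S..Max S}"
proof
  show "S \<subseteq> {Min S..Max S}"
    using assms(1) by auto
  show "{Min S..Max S} \<subseteq> S"
  proof
    fix m assume "m \<in> {Min S..Max S}"
    then show "m \<in> S"
      using convex[of "Min S" "Max S" m] assms(1,2) by simp
  qed
qed
lemma norm_sum_e_fwd_diff_in_range:
  fixes \<phi> :: "nat \<Rightarrow> real" and k :: int and d :: real
  assumes d: "0 < d" "d \<le> 1/2"
    and mono: "\<And>i j. i \<le> j \<Longrightarrow> j \<le> L \<Longrightarrow> fwd_diff \<phi> i \<le> fwd_diff \<phi> j"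
  shows "norm (\<Sum>j | j \<le> L \<and> k + d \<le> fwd_diff \<phi> j \<and> fwd_diff \<phi> j < k + 1 - d. e (\<phi> j))
    \<le> 2 / (pi * d)"
    (is "norm (\<Sum>j\<in>?S. _) \<le> _")
proof (cases "?S = {}")
  case True
  show ?thesis
    unfolding True using d by simp
next
  case False
  define a where "a = Min ?S"
  define b where "b = Max ?S"
  have "finite ?S"
    by simp
  have "b \<in> ?S"
    unfolding b_def using \<open>finite ?S\<close> False by (rule Max_in)
  then have "a \<le> b" "b \<le> L"
    unfolding a_def using \<open>finite ?S\<close> by (simp_all add: Min_le)
  have S: "?S = {a..b}"
    unfolding a_def b_def
  proof (rule finite_convex_nat_set_eq_atLeastAtMost)
    fix i j m assume i: "i \<in> ?S" and j: "j \<in> ?S" and "i \<le> m" "m \<le> j"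
    then have "m \<le> L"
      by simp
    then have "fwd_diff \<phi> i \<le> fwd_diff \<phi> m" "fwd_diff \<phi> m \<le> fwd_diff \<phi> j"
      using mono \<open>i \<le> m\<close> \<open>m \<le> j\<close> j by simp_all
    then show "m \<in> ?S"
      using i j \<open>m \<le> L\<close> by simp
  qed (use \<open>finite ?S\<close> False in simp_all)
  define \<psi> where "\<psi> i = \<phi> (a + i)" for i
  have "(\<Sum>j\<in>?S. e (\<phi> j)) = (\<Sum>i\<le>b - a. e (\<psi> i))"
    unfolding S using \<open>a \<le> b\<close> by (simp add: sum.atLeastAtMost_shift_0 atLeast0AtMost \<psi>_def)
  also have "norm \<dots> \<le> cot (pi * d / 2)"
  proof (rule kusmin_landau[OF d])
    fix i assume "i \<le> b - a"
    then have "a + i \<in> ?S"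
      unfolding S using \<open>a \<le> b\<close> by simp
    then show "k + d \<le> fwd_diff \<psi> i \<and> fwd_diff \<psi> i \<le> k + 1 - d"
      by (simp add: \<psi>_def fwd_diff_def)
  next
    fix i assume "i < b - a"
    then show "fwd_diff \<psi> i \<le> fwd_diff \<psi> (Suc i)"
      using mono[of "a + i" "Suc (a + i)"] \<open>b \<le> L\<close> by (simp add: \<psi>_def fwd_diff_def)
  qed
  also have "\<dots> \<le> 1 / (pi * d / 2)"
    using d by (intro cot_le_inverse) auto
  finally show ?thesis
    by simp
qed
lemma norm_sum_e_fwd_diff_level_set:
  fixes \<phi> :: "nat \<Rightarrow> real" and k :: int and lam d :: real
  assumes "0 < lam" and d: "0 < d" "d \<le> 1/2"
    and incr: "\<And>i j. i \<le> j \<Longrightarrow> j \<le> L \<Longrightarrow> lam * (real j - real i) \<le> fwd_diff \<phi> j - fwd_diff \<phi> i"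
  shows "norm (\<Sum>j | j \<le> L \<and> \<lfloor>fwd_diff \<phi> j + d\<rfloor> = k. e (\<phi> j)) \<le> 2 * d / lam + 1 + 2 / (pi * d)"
proof -
  \<comment> \<open>The upper bound of B is written as (k - d) + 2 d so that card_le_of_increments applies.\<close>
  define B where "B = {j. j \<le> L \<and> k - d \<le> fwd_diff \<phi> j \<and> fwd_diff \<phi> j < (k - d) + 2 * d}"
  define G where "G = {j. j \<le> L \<and> k + d \<le> fwd_diff \<phi> j \<and> fwd_diff \<phi> j < k + 1 - d}"
  have "{j. j \<le> L \<and> \<lfloor>fwd_diff \<phi> j + d\<rfloor> = k} = B \<union> G"
    using d by (auto simp: B_def G_def floor_eq_iff)
  moreover have "B \<inter> G = {}"
    by (auto simp: B_def G_def)
  ultimately have "(\<Sum>j | j \<le> L \<and> \<lfloor>fwd_diff \<phi> j + d\<rfloor> = k. e (\<phi> j)) = (\<Sum>j\<in>B. e (\<phi> j)) + (\<Sum>j\<in>G. e (\<phi> j))"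
    by (simp add: B_def G_def sum.union_disjoint)
  then have "norm (\<Sum>j | j \<le> L \<and> \<lfloor>fwd_diff \<phi> j + d\<rfloor> = k. e (\<phi> j))
      \<le> norm (\<Sum>j\<in>B. e (\<phi> j)) + norm (\<Sum>j\<in>G. e (\<phi> j))"
    by (simp add: norm_triangle_ineq)
  moreover have "norm (\<Sum>j\<in>B. e (\<phi> j)) \<le> 2 * d / lam + 1"
  proof -
    have "norm (\<Sum>j\<in>B. e (\<phi> j)) \<le> card B"
      using norm_sum[of "\<lambda>j. e (\<phi> j)" B] by simp
    also have "\<dots> \<le> 2 * d / lam + 1"
      unfolding B_def using \<open>0 < lam\<close> d incr by (intro card_le_of_increments) auto
    finally show ?thesis .
  qed
  moreover have "norm (\<Sum>j\<in>G. e (\<phi> j)) \<le> 2 / (pi * d)"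
    unfolding G_def
  proof (rule norm_sum_e_fwd_diff_in_range[OF d])
    fix i j :: nat assume "i \<le> j" "j \<le> L"
    moreover have "0 \<le> lam * (real j - real i)"
      using \<open>0 < lam\<close> \<open>i \<le> j\<close> by simp
    ultimately show "fwd_diff \<phi> i \<le> fwd_diff \<phi> j"
      using incr[of i j] by linarith
  qed
  ultimately show ?thesis
    by linarith
qed
lemma norm_sum_e_le_second_fwd_diff:
  fixes \<phi> :: "nat \<Rightarrow> real" and lam Lam d :: real
  assumes "0 < lam" and d: "0 < d" "d \<le> 1/2"
    and bounds: "\<And>j. j < L \<Longrightarrow> lam \<le> fwd_diff (fwd_diff \<phi>) j \<and> fwd_diff (fwd_diff \<phi>) j \<le> Lam"
  shows "norm (\<Sum>j\<le>L. e (\<phi> j)) \<le> (Lam * L + 2) * (2 * d / lam + 1 + 2 / (pi * d))"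
proof -
  define g where "g = fwd_diff \<phi>"
  define \<kappa> where "\<kappa> j = \<lfloor>g j + d\<rfloor>" for j
  have incr: "lam * (real j - real i) \<le> g j - g i \<and> g j - g i \<le> Lam * (real j - real i)"
    if "i \<le> j" "j \<le> L" for i j
    unfolding g_def using bounds that by (rule fwd_diff_bounds_imp_increment_bounds)
  have "\<kappa> i \<le> \<kappa> j" if "i \<le> j" "j \<le> L" for i j
  proof -
    have "0 \<le> lam * (real j - real i)"
      using \<open>0 < lam\<close> \<open>i \<le> j\<close> by simp
    then show ?thesis
      using incr[OF that] unfolding \<kappa>_def by (intro floor_mono) linarith
  qed
  then have "\<kappa> ` {..L} \<subseteq> {\<kappa> 0..\<kappa> L}"
    by auto
  then have "(\<Sum>j\<le>L. e (\<phi> j)) = (\<Sum>k\<in>{\<kappa> 0..\<kappa> L}. \<Sum>j | j \<le> L \<and> \<kappa> j = k. e (\<phi> j))"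
    by (subst sum.group[symmetric]) auto
  also have "norm \<dots> \<le> (\<Sum>k\<in>{\<kappa> 0..\<kappa> L}. 2 * d / lam + 1 + 2 / (pi * d))"
    unfolding \<kappa>_def g_def using \<open>0 < lam\<close> d incr
    by (intro sum_norm_le norm_sum_e_fwd_diff_level_set) (auto simp: g_def)
  also have "\<dots> \<le> (Lam * L + 2) * (2 * d / lam + 1 + 2 / (pi * d))"
  proof -
    have "real (card {\<kappa> 0..\<kappa> L}) = \<kappa> L - \<kappa> 0 + 1"
      using \<open>\<kappa> ` {..L} \<subseteq> {\<kappa> 0..\<kappa> L}\<close> by auto
    also have "\<dots> \<le> g L - g 0 + 2"
      unfolding \<kappa>_def by linarith
    also have "\<dots> \<le> Lam * L + 2"
      using incr[of 0 L] by simp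
    finally show ?thesis
      using \<open>0 < lam\<close> d by (simp add: mult_right_mono)
  qed
  finally show ?thesis .
qed

lemma sqrt_pi_bounds: "1.75 \<le> sqrt pi" "sqrt pi \<le> 1.7725"
proof -
  show "1.75 \<le> sqrt pi"
    using pi_approx by (intro real_le_rsqrt) (simp add: power2_eq_square)
  have "sqrt pi \<le> sqrt (1.7725\<^sup>2)"
    using pi_approx by (intro real_sqrt_le_mono) (simp add: power2_eq_square)
  then show "sqrt pi \<le> 1.7725"
    by simp
qed

lemma norm_sum_e_le_second_fwd_diff_small_lam:
  fixes \<phi> :: "nat \<Rightarrow> real" and lam Lam Y :: real
  assumes "0 < lam" "sqrt lam < 1/2" "lam \<le> Lam" "real L + 1 \<le> Y"
    and bounds: "\<And>j. j < L \<Longrightarrow> lam \<le> fwd_diff (fwd_diff \<phi>) j \<and> fwd_diff (fwd_diff \<phi>) j \<le> Lam"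
  shows "norm (\<Sum>j\<le>Suc L. e (\<phi> j)) \<le> 2.79 * (Lam * Y + 2) / sqrt lam"
proof -
  define s where "s = sqrt lam"
  have s: "0 < s" "s < 1/2" "s * s \<le> Lam" and ss: "s * s = lam"
    using assms(1-3) by (auto simp: s_def)
  define d where "d = s / sqrt pi"
  have d: "0 < d" "d \<le> 1/2"
    using s sqrt_pi_bounds by (auto simp: d_def field_simps)
  \<comment> \<open>This choice of d minimises 2 d / lam + 2 / (pi d).\<close>
  have K: "2 * d / lam + 1 + 2 / (pi * d) = (4 / sqrt pi + s) / s"
    using s by (simp add: d_def field_simps flip: ss)
  have "norm (\<Sum>j\<le>Suc L. e (\<phi> j)) \<le> norm (\<Sum>j\<le>L. e (\<phi> j)) + norm (e (\<phi> (Suc L)))"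
    unfolding sum.atMost_Suc by (rule norm_triangle_ineq)
  also have "\<dots> \<le> (Lam * L + 2) * ((4 / sqrt pi + s) / s) + 1"
    using norm_sum_e_le_second_fwd_diff[OF \<open>0 < lam\<close> d bounds] by (simp add: K)
  also have "\<dots> \<le> 2.79 * (Lam * Y + 2) / s"
  proof -
    have q: "4 / sqrt pi \<le> 2.29"
      using sqrt_pi_bounds by (simp add: field_simps)
    moreover have "0 \<le> Lam" "real L \<le> Y - 1"
      using assms(1,3,4) by auto
    ultimately have "Lam * L * (4 / sqrt pi + s) \<le> Lam * (Y - 1) * 2.79"
      using s by (intro mult_mono) auto
    moreover have "3 * s - 2.79 * (s * s) \<le> 1"
      using sum_power2_ge_zero[of "s - 0.54" 0] s by (simp add: power2_eq_square algebra_simps)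
    ultimately have "s + (Lam * L + 2) * (4 / sqrt pi + s) \<le> 2.79 * (Lam * Y + 2)"
      using q s by (simp add: algebra_simps)
    then have "(s + (Lam * L + 2) * (4 / sqrt pi + s)) / s \<le> 2.79 * (Lam * Y + 2) / s"
      using s by (intro divide_right_mono) auto
    moreover have "(Lam * L + 2) * ((4 / sqrt pi + s) / s) + 1 = (s + (Lam * L + 2) * (4 / sqrt pi + s)) / s"
      using s by (simp add: field_simps)
    ultimately show ?thesis
      by linarith
  qed
  finally show ?thesis
    by (simp add: s_def)
qed

lemma norm_sum_e_le_second_fwd_diff_sqrt:
  fixes \<phi> :: "nat \<Rightarrow> real" and lam Lam Y :: real
  assumes "0 < lam" "lam \<le> Lam" "1 \<le> Y" "real M \<le> Y + 1"
    and bounds: "\<And>j. Suc (Suc j) < M \<Longrightarrow> lam \<le> fwd_diff (fwd_diff \<phi>) j \<and> fwd_diff (fwd_diff \<phi>) j \<le> Lam"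
  shows "norm (\<Sum>j<M. e (\<phi> j)) \<le> 2.79 * (Lam * Y + 2) / sqrt lam"
proof (cases "sqrt lam < 1/2 \<and> 2 \<le> M")
  case True
  then obtain L where M: "M = Suc (Suc L)"
    by (metis add_2_eq_Suc le_Suc_ex)
  show ?thesis
    unfolding M lessThan_Suc_atMost using True assms M
    by (intro norm_sum_e_le_second_fwd_diff_small_lam) auto
next
  case False
  define s where "s = sqrt lam"
  have s: "0 < s" "s * s \<le> Lam"
    using assms(1,2) by (auto simp: s_def)
  have "real M \<le> 2.79 * s * Y + 2.79 * 2 / s"
  proof (cases "1/2 \<le> s")
    case True
    have "Y \<le> 2.79 * s * Y"
      using True \<open>1 \<le> Y\<close> mult_right_mono[of 1 "2.79 * s" Y] by simp
    moreover have "1 \<le> 2.79 * 2 / s \<or> 2 * Y \<le> 2.79 * s * Y"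
      using s \<open>1 \<le> Y\<close> mult_right_mono[of 2 "2.79 * s" Y] by (cases "s \<le> 2") (simp_all add: field_simps)
    moreover have "0 \<le> 2.79 * 2 / s"
      using s by simp
    ultimately show ?thesis
      using \<open>real M \<le> Y + 1\<close> \<open>1 \<le> Y\<close> by linarith
  next
    case False
    then have "real M \<le> 1" "1 \<le> 2.79 * 2 / s"
      using \<open>\<not> (sqrt lam < 1/2 \<and> 2 \<le> M)\<close> s by (auto simp: s_def field_simps)
    moreover have "0 \<le> 2.79 * s * Y"
      using s \<open>1 \<le> Y\<close> by simp
    ultimately show ?thesis
      by linarith
  qed
  also have "\<dots> = 2.79 * (s * s * Y + 2) / s"
    using s by (simp add: field_simps)
  also have "\<dots> \<le> 2.79 * (Lam * Y + 2) / s"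
    using s \<open>1 \<le> Y\<close> by (intro divide_right_mono mult_left_mono add_right_mono) auto
  finally show ?thesis
    using norm_sum[of "\<lambda>j. e (\<phi> j)" "{..<M}"] by (simp add: s_def)
qed

lemma real_mvt_within:
  fixes F F' :: "real \<Rightarrow> real"
  assumes "a < b"
    and "\<And>x. x \<in> {a..b} \<Longrightarrow> (F has_real_derivative F' x) (at x within {a..b})"
  obtains \<xi> where "a < \<xi>" "\<xi> < b" "F b - F a = F' \<xi> * (b - a)"
proof -
  have "(F has_derivative (*) (F' x)) (at x within {a..b})" if "a \<le> x" "x \<le> b" for x
    using assms(2) that by (intro has_field_derivative_imp_has_derivative) auto
  from mvt_simple[OF \<open>a < b\<close> this] show thesis
    using that by auto
qed

lemma second_difference_eq_deriv2:
  fixes f f' f'' :: "real \<Rightarrow> real"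
  assumes "0 < h"
    and f': "\<And>x. x \<in> {a..a + 2*h} \<Longrightarrow> (f has_real_derivative f' x) (at x within {a..a + 2*h})"
    and f'': "\<And>x. x \<in> {a..a + 2*h} \<Longrightarrow> (f' has_real_derivative f'' x) (at x within {a..a + 2*h})"
  obtains \<eta> where "a < \<eta>" "\<eta> < a + 2*h" "f (a + 2*h) - 2 * f (a + h) + f a = h^2 * f'' \<eta>"
proof -
  define F where "F t = f (t + h) - f t" for t
  have dF: "(F has_real_derivative f' (t + h) - f' t) (at t within {a..a + h})" if t: "t \<in> {a..a + h}" for t
  proof -
    have "(f has_real_derivative f' (t + h)) (at (t + h) within (\<lambda>t. t + h) ` {a..a + h})"
      using t by (intro has_field_derivative_subset[OF f']) auto
    moreover have "((\<lambda>t. t + h) has_real_derivative 1) (at t within {a..a + h})"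
      by (auto intro!: derivative_eq_intros)
    ultimately have "((\<lambda>t. f (t + h)) has_real_derivative f' (t + h)) (at t within {a..a + h})"
      using DERIV_image_chain by (fastforce simp: o_def)
    moreover have "(f has_real_derivative f' t) (at t within {a..a + h})"
      using t \<open>0 < h\<close> by (intro has_field_derivative_subset[OF f']) auto
    ultimately show ?thesis
      unfolding F_def by (rule DERIV_diff)
  qed
  obtain \<tau> where \<tau>: "a < \<tau>" "\<tau> < a + h" "F (a + h) - F a = (f' (\<tau> + h) - f' \<tau>) * (a + h - a)"
    by (rule real_mvt_within[OF _ dF]) (use \<open>0 < h\<close> in auto)
  have df': "(f' has_real_derivative f'' t) (at t within {\<tau>..\<tau> + h})" if "t \<in> {\<tau>..\<tau> + h}" for t
    using that \<tau> by (intro has_field_derivative_subset[OF f'']) auto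
  obtain \<eta> where \<eta>: "\<tau> < \<eta>" "\<eta> < \<tau> + h" "f' (\<tau> + h) - f' \<tau> = f'' \<eta> * (\<tau> + h - \<tau>)"
    by (rule real_mvt_within[OF _ df']) (use \<open>0 < h\<close> in auto)
  show thesis
  proof (rule that[of \<eta>])
    show "a < \<eta>" "\<eta> < a + 2*h"
      using \<tau> \<eta> by auto
    have "f (a + 2*h) - 2 * f (a + h) + f a = F (a + h) - F a"
      unfolding F_def mult_2 add.assoc by simp
    also have "\<dots> = h^2 * f'' \<eta>"
      using \<tau>(3) \<eta>(3) by (simp add: power2_eq_square)
    finally show "f (a + 2*h) - 2 * f (a + h) + f a = h^2 * f'' \<eta>" .
  qed
qed

lemma second_fwd_diff_samples_bounds:
  fixes f f' f'' :: "real \<Rightarrow> real" and I :: "real set"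
  assumes f': "\<And>x. x \<in> I \<Longrightarrow> (f has_real_derivative f' x) (at x within I)"
    and f'': "\<And>x. x \<in> I \<Longrightarrow> (f' has_real_derivative f'' x) (at x within I)"
    and range: "\<And>x. x \<in> I \<Longrightarrow> lam \<le> f'' x \<and> f'' x \<le> Lam"
    and sub: "{x0 + real j..x0 + real j + 2} \<subseteq> I"
  shows "lam \<le> fwd_diff (fwd_diff (\<lambda>i. f (x0 + real i))) j
    \<and> fwd_diff (fwd_diff (\<lambda>i. f (x0 + real i))) j \<le> Lam"
proof -
  define a where "a = x0 + real j"
  have sub': "{a..a + 2*1} \<subseteq> I"
    using sub by (simp add: a_def)
  have d1: "(f has_real_derivative f' x) (at x within {a..a + 2*1})"
    and d2: "(f' has_real_derivative f'' x) (at x within {a..a + 2*1})" if "x \<in> {a..a + 2*1}" for x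
    using that sub' by (intro has_field_derivative_subset[OF f'] has_field_derivative_subset[OF f'']; force)+
  obtain \<eta> where \<eta>: "a < \<eta>" "\<eta> < a + 2*1" "f (a + 2*1) - 2 * f (a + 1) + f a = 1^2 * f'' \<eta>"
    by (rule second_difference_eq_deriv2[OF zero_less_one d1 d2])
  have "\<eta> \<in> I"
    using subsetD[OF sub', of \<eta>] \<eta>(1,2) by simp
  moreover have "fwd_diff (fwd_diff (\<lambda>i. f (x0 + real i))) j = f'' \<eta>"
    using \<eta>(3) by (simp add: fwd_diff_fwd_diff a_def algebra_simps)
  ultimately show ?thesis
    using range by simp
qed

lemma sum_int_points_Ioc:
  fixes a b :: real and F :: "int \<Rightarrow> 'a::comm_monoid_add"
  shows "(\<Sum>n | a < of_int n \<and> of_int n \<le> b. F n) = (\<Sum>j<nat (\<lfloor>b\<rfloor> - \<lfloor>a\<rfloor>). F (\<lfloor>a\<rfloor> + 1 + int j))"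
proof -
  have "{n. a < of_int n \<and> of_int n \<le> b} = (\<lambda>j. \<lfloor>a\<rfloor> + 1 + int j) ` {..<nat (\<lfloor>b\<rfloor> - \<lfloor>a\<rfloor>)}"
  proof (intro equalityI subsetI)
    fix n assume "n \<in> {n. a < of_int n \<and> of_int n \<le> b}"
    then have "\<lfloor>a\<rfloor> < n" "n \<le> \<lfloor>b\<rfloor>"
      by (auto simp: floor_less_iff le_floor_iff)
    then show "n \<in> (\<lambda>j. \<lfloor>a\<rfloor> + 1 + int j) ` {..<nat (\<lfloor>b\<rfloor> - \<lfloor>a\<rfloor>)}"
      by (intro image_eqI[of _ _ "nat (n - \<lfloor>a\<rfloor> - 1)"]) auto
  next
    fix n assume "n \<in> (\<lambda>j. \<lfloor>a\<rfloor> + 1 + int j) ` {..<nat (\<lfloor>b\<rfloor> - \<lfloor>a\<rfloor>)}"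
    then have "\<lfloor>a\<rfloor> < n" "n \<le> \<lfloor>b\<rfloor>"
      by auto
    then show "n \<in> {n. a < of_int n \<and> of_int n \<le> b}"
      by (auto simp: floor_less_iff le_floor_iff)
  qed
  then show ?thesis
    by (simp add: sum.reindex inj_on_def)
qed

lemma nat_floor_diff_le:
  fixes a b :: real
  assumes "a \<le> b"
  shows "real (nat (\<lfloor>b\<rfloor> - \<lfloor>a\<rfloor>)) \<le> b - a + 1"
proof -
  have "\<lfloor>a\<rfloor> \<le> \<lfloor>b\<rfloor>"
    using assms by (rule floor_mono)
  then have "real (nat (\<lfloor>b\<rfloor> - \<lfloor>a\<rfloor>)) = \<lfloor>b\<rfloor> - \<lfloor>a\<rfloor>"
    by simp
  then show ?thesis
    by linarith
qed

lemma two_div_sqrt_pi_constant_ge: "2.79 \<le> (2 / sqrt pi) * (1 + sqrt (1 + 3 * pi / 8))"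
proof -
  have "1.475 \<le> sqrt (1 + 3 * pi / 8)"
    using pi_approx by (intro real_le_rsqrt) (simp add: power2_eq_square)
  then have "2.79 * sqrt pi \<le> 2 * (1 + sqrt (1 + 3 * pi / 8))"
    using sqrt_pi_bounds(2) by simp
  then show ?thesis
    by (simp add: field_simps)
qed

lemma sqrt_sq_div_add_powr_eq:
  fixes lam Lam Y :: real
  assumes "0 < lam" "0 \<le> Lam" "0 < Y"
  shows "sqrt (Lam^2 / lam) + 2 * (lam * Y^2) powr (-1/2) = (Lam * Y + 2) / (sqrt lam * Y)"
proof -
  have "(lam * Y^2) powr (-1/2) = inverse ((lam * Y^2) powr (1/2))"
    by (simp add: powr_minus[symmetric])
  also have "\<dots> = 1 / (sqrt lam * Y)"
    using assms by (simp add: powr_half_sqrt real_sqrt_mult inverse_eq_divide)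
  finally show ?thesis
    using assms by (simp add: real_sqrt_divide field_simps)
qed

theorem lemma10:
  fixes X Y lam Lam :: real and f f' f'' :: "real \<Rightarrow> real"
  assumes "Y \<ge> 1"
    and "\<And>x. x \<in> {X<..X+Y} \<Longrightarrow> (f has_real_derivative f' x) (at x within {X<..X+Y})"
    and "\<And>x. x \<in> {X<..X+Y} \<Longrightarrow> (f' has_real_derivative f'' x) (at x within {X<..X+Y})"
    and "continuous_on {X<..X+Y} f''"
    and "0 < lam"
    and "\<And>x. x \<in> {X<..X+Y} \<Longrightarrow> lam \<le> f'' x \<and> f'' x \<le> Lam"
  shows "norm ((1 / Y) * (\<Sum>n\<in>{n::int. X < of_int n \<and> of_int n \<le> X + Y}. e (f (of_int n))))
           \<le> (2 / sqrt pi) * (1 + sqrt (1 + 3 * pi / 8))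
               * (sqrt (Lam^2 / lam) + 2 * (lam * Y^2) powr (-1/2))"
proof -
  define M where "M = nat (\<lfloor>X + Y\<rfloor> - \<lfloor>X\<rfloor>)"
  define \<phi> where "\<phi> j = f (\<lfloor>X\<rfloor> + 1 + real j)" for j
  have "lam \<le> Lam"
    using assms(1) assms(6)[of "X + Y"] by auto
  have "real M \<le> Y + 1"
    using nat_floor_diff_le[of X "X + Y"] assms(1) by (simp add: M_def)
  have "lam \<le> fwd_diff (fwd_diff \<phi>) j \<and> fwd_diff (fwd_diff \<phi>) j \<le> Lam" if "Suc (Suc j) < M" for j
    unfolding \<phi>_def using assms(2,3,6)
  proof (rule second_fwd_diff_samples_bounds)
    show "{\<lfloor>X\<rfloor> + 1 + real j..\<lfloor>X\<rfloor> + 1 + real j + 2} \<subseteq> {X<..X + Y}"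
      using that by (auto simp: M_def) linarith+
  qed
  then have "norm (\<Sum>j<M. e (\<phi> j)) \<le> 2.79 * (Lam * Y + 2) / sqrt lam"
    by (rule norm_sum_e_le_second_fwd_diff_sqrt[OF assms(5) \<open>lam \<le> Lam\<close> assms(1) \<open>real M \<le> Y + 1\<close>])
  then have "norm (\<Sum>j<M. e (\<phi> j)) / Y \<le> 2.79 * (Lam * Y + 2) / sqrt lam / Y"
    using assms(1) by (intro divide_right_mono) auto
  then have "norm ((1 / Y) * (\<Sum>j<M. e (\<phi> j))) \<le> 2.79 * ((Lam * Y + 2) / (sqrt lam * Y))"
    using assms(1) by (simp add: norm_divide)
  also have "\<dots> \<le> (2 / sqrt pi) * (1 + sqrt (1 + 3 * pi / 8)) * ((Lam * Y + 2) / (sqrt lam * Y))"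
    using two_div_sqrt_pi_constant_ge assms(1,5) \<open>lam \<le> Lam\<close> by (intro mult_right_mono) auto
  also have "(Lam * Y + 2) / (sqrt lam * Y) = sqrt (Lam^2 / lam) + 2 * (lam * Y^2) powr (-1/2)"
    using assms(1,5) \<open>lam \<le> Lam\<close> by (intro sqrt_sq_div_add_powr_eq[symmetric]) auto
  also have "(\<Sum>j<M. e (\<phi> j)) = (\<Sum>n\<in>{n::int. X < of_int n \<and> of_int n \<le> X + Y}. e (f (of_int n)))"
    by (simp add: sum_int_points_Ioc M_def \<phi>_def add_ac)
  finally show ?thesis .
qed

end
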